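(* Let $d\ge1$. Let $M$ be a random symmetric $d\times d$ matrix whose entries $M_{a,b}$, $a\ge b$, are independent and uniform on $\{-1,+1\}$. Let $j$ be independent of $M$ and uniform on $\{\lceil d/2\rceil,\dots,d\}$. Let $S=f(M)$, where $f$ is any deterministic function taking values in bit strings of length at most $d^2/128$. Let $\hat M_j=g(S,j)\in\mathbb R^d$ for an arbitrary deterministic function $g$. Then $$\mathbb E_{M,j}\Big[\big\|[\hat M_j-M_j]\big\|^2\Big]\ge\frac d8,$$ where $M_j$ denotes the $j$-th column of $M$.
   Context: For a scalar $w$, $[w]=\min\{1,\max\{-1,w\}\}$ denotes clipping to $[-1,1]$. For a vector $\mathbf w=(w_1,\dots,w_d)$, $[\mathbf w]=([w_1],\dots,[w_d])$. *)

theory Defs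
  imports "HOL-Probability.Probability"
begin

definition clip :: "real \<Rightarrow> real" where
  "clip w = min 1 (max (-1) w)"

text \<open>Symmetric d x d matrices with entries in {-1,+1}, indexed by {1..d}
  (entries outside the index range are fixed to 0 so the set is finite).
  The uniform distribution on this set is exactly the distribution with
  independent uniform signs M a b for a \<ge> b.\<close>
definition sym_sign_matrices :: "nat \<Rightarrow> (nat \<Rightarrow> nat \<Rightarrow> real) set" where
  "sym_sign_matrices d =
     {M. (\<forall>a\<in>{1..d}. \<forall>b\<in>{1..d}. M a b \<in> {-1, 1} \<and> M a b = M b a)
       \<and> (\<forall>a b. (a \<notin> {1..d} \<or> b \<notin> {1..d}) \<longrightarrow> M a b = 0)}"

text \<open>Squared Euclidean norm of the coordinatewise clipped difference
  [v - M_j], vectors in R^d represented as functions on {1..d}.\<close>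
definition clipped_sq_err :: "nat \<Rightarrow> (nat \<Rightarrow> real) \<Rightarrow> (nat \<Rightarrow> nat \<Rightarrow> real) \<Rightarrow> nat \<Rightarrow> real" where
  "clipped_sq_err d v M j = (\<Sum>i=1..d. (clip (v i - M i j))\<^sup>2)"

end

theory Submission
  imports Defs
begin

text \<open>Round the decoded column \<open>j\<close> to signs. Every wrong sign among the entries
  \<open>M\<^sub>j\<^sub>i\<close>, \<open>i \<le> j\<close>, costs at least 1 in the clipped error, and for the columns
  \<open>j \<ge> d/2\<close> these entries form disjoint sets of about \<open>3d\<^sup>2/8\<close> independent fair signs.
  Against a fixed message the number of wrong signs is binomial with mean \<open>\<ge> nd/4\<close>
  (\<open>n\<close> the number of columns), and its exponential moment is tiny; a union bound over the fewer
  than \<open>2^(d\<^sup>2/128 + 1)\<close> messages therefore keeps the expected number of wrong signs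
  above \<open>nd/8\<close>.\<close>

definition lower_tri :: "nat \<Rightarrow> (nat \<times> nat) set" where
  "lower_tri d = {(a, b). 1 \<le> b \<and> b \<le> a \<and> a \<le> d}"

definition sym_of_lower :: "nat \<Rightarrow> (nat \<times> nat \<Rightarrow> real) \<Rightarrow> nat \<Rightarrow> nat \<Rightarrow> real" where
  "sym_of_lower d x a b =
     (if (a, b) \<in> lower_tri d then x (a, b) else if (b, a) \<in> lower_tri d then x (b, a) else 0)"

lemma finite_lower_tri: "finite (lower_tri d)"
proof -
  have "lower_tri d \<subseteq> {1..d} \<times> {1..d}" by (auto simp: lower_tri_def)
  thus ?thesis by (rule finite_subset) auto
qed

lemma bij_betw_sym_of_lower:
  "bij_betw (sym_of_lower d) (PiE (lower_tri d) (\<lambda>_. {-1, 1})) (sym_sign_matrices d)"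
proof (rule bij_betwI')
  fix x y :: "nat \<times> nat \<Rightarrow> real"
  assume x: "x \<in> PiE (lower_tri d) (\<lambda>_. {-1, 1})" and y: "y \<in> PiE (lower_tri d) (\<lambda>_. {-1, 1})"
  show "(sym_of_lower d x = sym_of_lower d y) = (x = y)"
  proof
    assume eq: "sym_of_lower d x = sym_of_lower d y"
    show "x = y"
    proof
      fix p show "x p = y p"
      proof (cases "p \<in> lower_tri d")
        case True
        obtain a b where p: "p = (a, b)" by force
        have "sym_of_lower d x a b = sym_of_lower d y a b" using eq by simp
        thus ?thesis using True p by (simp add: sym_of_lower_def)
      next
        case False thus ?thesis using x y by (metis PiE_arb)
      qed
    qed
  qed simp
next
  fix x :: "nat \<times> nat \<Rightarrow> real"
  assume x: "x \<in> PiE (lower_tri d) (\<lambda>_. {-1, 1})"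
  show "sym_of_lower d x \<in> sym_sign_matrices d"
    unfolding sym_sign_matrices_def
  proof (intro CollectI conjI ballI allI impI)
    fix a b assume a: "a \<in> {1..d}" and b: "b \<in> {1..d}"
    have "(a, b) \<in> lower_tri d \<or> (b, a) \<in> lower_tri d" using a b by (auto simp: lower_tri_def)
    then show "sym_of_lower d x a b \<in> {-1, 1}" using x by (auto simp: sym_of_lower_def PiE_def Pi_def)
    show "sym_of_lower d x a b = sym_of_lower d x b a" using a b by (auto simp: sym_of_lower_def lower_tri_def)
  next
    fix a b assume "a \<notin> {1..d} \<or> b \<notin> {1..d}"
    thus "sym_of_lower d x a b = 0" by (auto simp: sym_of_lower_def lower_tri_def)
  qed
next
  fix M assume M: "M \<in> sym_sign_matrices d"
  define x where "x = restrict (\<lambda>(a, b). M a b) (lower_tri d)"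
  have "x \<in> PiE (lower_tri d) (\<lambda>_. {-1, 1})"
  proof -
    have "M a b \<in> {-1, 1}" if "(a, b) \<in> lower_tri d" for a b
      using M that unfolding sym_sign_matrices_def lower_tri_def by auto
    thus ?thesis by (auto simp: x_def)
  qed
  moreover have "M = sym_of_lower d x"
    using M by (intro ext) (auto simp: x_def sym_of_lower_def lower_tri_def sym_sign_matrices_def)
  ultimately show "\<exists>x\<in>PiE (lower_tri d) (\<lambda>_. {-1, 1}). M = sym_of_lower d x" by blast
qed

lemma finite_sym_sign_matrices: "finite (sym_sign_matrices d)"
  using bij_betw_finite[OF bij_betw_sym_of_lower] finite_lower_tri by (auto intro: finite_PiE)

lemma card_sym_sign_matrices: "card (sym_sign_matrices d) = 2 ^ card (lower_tri d)"
  using bij_betw_same_card[OF bij_betw_sym_of_lower]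
  by (simp add: card_PiE finite_lower_tri numeral_2_eq_2)

definition mismatches :: "(nat \<times> nat) set \<Rightarrow> (nat \<times> nat \<Rightarrow> real) \<Rightarrow> (nat \<Rightarrow> nat \<Rightarrow> real) \<Rightarrow> nat" where
  "mismatches B \<tau> M = card {p \<in> B. M (fst p) (snd p) \<noteq> \<tau> p}"

lemma sum_power_mismatches:
  fixes y :: real
  assumes B: "B \<subseteq> lower_tri d" and sign: "\<And>p. p \<in> B \<Longrightarrow> \<tau> p \<in> {-1, 1}"
  shows "(\<Sum>M\<in>sym_sign_matrices d. y ^ mismatches B \<tau> M)
         = card (sym_sign_matrices d) * ((1 + y) / 2) ^ card B"
proof -
  define w where "w = (\<lambda>p (v::real). if p \<in> B \<and> v \<noteq> \<tau> p then y else 1)"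
  define X where "X = PiE (lower_tri d) (\<lambda>_. {-1, 1::real})"
  have "(\<Sum>M\<in>sym_sign_matrices d. y ^ mismatches B \<tau> M)
      = (\<Sum>x\<in>X. y ^ mismatches B \<tau> (sym_of_lower d x))"
    unfolding X_def by (rule sum.reindex_bij_betw[OF bij_betw_sym_of_lower, symmetric])
  also have "\<dots> = (\<Sum>x\<in>X. \<Prod>p\<in>lower_tri d. w p (x p))"
  proof (rule sum.cong[OF refl])
    fix x
    have "{p \<in> lower_tri d. p \<in> B \<and> x p \<noteq> \<tau> p} = {p \<in> B. sym_of_lower d x (fst p) (snd p) \<noteq> \<tau> p}"
      using B by (auto simp: sym_of_lower_def)
    then show "y ^ mismatches B \<tau> (sym_of_lower d x) = (\<Prod>p\<in>lower_tri d. w p (x p))"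
      using prod.inter_filter[OF finite_lower_tri[of d], where g="\<lambda>_. y" and P="\<lambda>p. p \<in> B \<and> x p \<noteq> \<tau> p"]
      by (simp add: w_def mismatches_def)
  qed
  also have "\<dots> = (\<Prod>p\<in>lower_tri d. \<Sum>v\<in>{-1, 1}. w p v)"
    unfolding X_def by (rule prod_sum_PiE[symmetric]) (auto simp: finite_lower_tri)
  also have "\<dots> = (\<Prod>p\<in>lower_tri d. if p \<in> B then 1 + y else 2)"
  proof (rule prod.cong[OF refl])
    fix p assume "p \<in> lower_tri d"
    show "(\<Sum>v\<in>{-1, 1}. w p v) = (if p \<in> B then 1 + y else 2)"
      using sign[of p] by (auto simp: w_def)
  qed
  also have "\<dots> = (1 + y) ^ card B * 2 ^ (card (lower_tri d) - card B)"
  proof -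
    have "lower_tri d \<inter> {x. x \<in> B} = B" "lower_tri d \<inter> - {x. x \<in> B} = lower_tri d - B"
      using B by auto
    thus ?thesis
      by (simp add: prod.If_cases finite_lower_tri card_Diff_subset finite_subset[OF B finite_lower_tri] B)
  qed
  also have "\<dots> = card (sym_sign_matrices d) * ((1 + y) / 2) ^ card B"
  proof -
    have "card B \<le> card (lower_tri d)" using B finite_lower_tri by (rule card_mono[rotated])
    hence "(2::real) ^ card (lower_tri d) = 2 ^ card B * 2 ^ (card (lower_tri d) - card B)"
      by (simp add: power_add[symmetric])
    thus ?thesis by (simp add: card_sym_sign_matrices power_divide)
  qed
  finally show ?thesis .
qed

lemma sum_mismatches:
  assumes B: "B \<subseteq> lower_tri d" and sign: "\<And>p. p \<in> B \<Longrightarrow> \<tau> p \<in> {-1, 1}"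
  shows "(\<Sum>M\<in>sym_sign_matrices d. real (mismatches B \<tau> M))
         = card (sym_sign_matrices d) * card B / 2"
proof -
  let ?Ms = "sym_sign_matrices d"
  let ?miss = "\<lambda>p M. if M (fst p) (snd p) \<noteq> \<tau> p then 1 else (0::real)"
  have entry: "(\<Sum>M\<in>?Ms. ?miss p M) = card ?Ms / 2" if p: "p \<in> B" for p
  proof -
    \<comment> \<open>at \<open>y = 0\<close> the generating function for \<open>{p}\<close> counts the matrices agreeing with \<open>\<tau>\<close> at \<open>p\<close>\<close>
    have "(0::real) ^ mismatches {p} \<tau> M = 1 - ?miss p M" for M
      by (simp add: mismatches_def Collect_conv_if)
    moreover have "(\<Sum>M\<in>?Ms. (0::real) ^ mismatches {p} \<tau> M) = card ?Ms / 2"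
      using sum_power_mismatches[of "{p}" d \<tau> 0] B sign p by auto
    ultimately show ?thesis by (simp add: sum_subtractf)
  qed
  have "finite B" using finite_subset[OF B finite_lower_tri] .
  then have "(\<Sum>M\<in>?Ms. real (mismatches B \<tau> M)) = (\<Sum>M\<in>?Ms. \<Sum>p\<in>B. ?miss p M)"
    by (simp add: mismatches_def sum.inter_filter[symmetric])
  also have "\<dots> = (\<Sum>p\<in>B. \<Sum>M\<in>?Ms. ?miss p M)" by (rule sum.swap)
  also have "\<dots> = (\<Sum>p\<in>B. card ?Ms / 2)" by (rule sum.cong) (simp_all add: entry)
  finally show ?thesis by simp
qed

lemma of_nat_ge_quarter_power_bound: "real T * (1 - 4 ^ T * (1 / 4) ^ h) \<le> real h"
proof (cases "T \<le> h")
  case True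
  have "real T * (1 - 4 ^ T * (1 / 4) ^ h) \<le> real T" by (rule mult_left_le) auto
  with True show ?thesis by linarith
next
  case False
  then have "(4::real) ^ T * (1 / 4) ^ h = 4 ^ (T - h)"
    by (simp add: power_diff power_one_over)
  moreover have "(1::real) \<le> 4 ^ (T - h)" by simp
  ultimately have "real T * (1 - 4 ^ T * (1 / 4) ^ h) \<le> 0" by (simp add: mult_nonneg_nonpos)
  then show ?thesis by linarith
qed

text \<open>A union bound over the possible messages: for each fixed message the mismatch count is
  binomial, and the pointwise bound \<open>T (1 - 4\<^sup>T 4\<^sup>-\<^sup>h) \<le> h\<close> turns its exponential moment at
  \<open>1/4\<close> into a lower bound on the mean.\<close>
lemma sum_mismatches_encoded_ge:
  fixes f :: "(nat \<Rightarrow> nat \<Rightarrow> real) \<Rightarrow> 'm" and \<tau> :: "'m \<Rightarrow> nat \<times> nat \<Rightarrow> real" and T :: nat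
  assumes B: "B \<subseteq> lower_tri d" and sign: "\<And>s p. p \<in> B \<Longrightarrow> \<tau> s p \<in> {-1, 1}"
    and S: "finite S" "f ` sym_sign_matrices d \<subseteq> S"
  shows "real (card (sym_sign_matrices d)) * real T * (1 - 4 ^ T * real (card S) * (5 / 8) ^ card B)
         \<le> (\<Sum>M\<in>sym_sign_matrices d. real (mismatches B (\<tau> (f M)) M))"
proof -
  let ?Ms = "sym_sign_matrices d"
  let ?h = "\<lambda>M. mismatches B (\<tau> (f M)) M"
  have "(\<Sum>M\<in>?Ms. (1 / 4 :: real) ^ ?h M) \<le> (\<Sum>M\<in>?Ms. \<Sum>s\<in>S. (1 / 4) ^ mismatches B (\<tau> s) M)"
    using S by (intro sum_mono member_le_sum) auto
  also have "\<dots> = (\<Sum>s\<in>S. \<Sum>M\<in>?Ms. (1 / 4) ^ mismatches B (\<tau> s) M)" by (rule sum.swap)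
  also have "\<dots> = card S * (card ?Ms * (5 / 8) ^ card B)"
    using sum_power_mismatches[OF B sign] by simp
  finally have moment: "(\<Sum>M\<in>?Ms. (1 / 4 :: real) ^ ?h M) \<le> card S * (card ?Ms * (5 / 8) ^ card B)" .
  have "real (card ?Ms) * real T * (1 - 4 ^ T * real (card S) * (5 / 8) ^ card B)
        \<le> real (card ?Ms) * real T - real T * 4 ^ T * (\<Sum>M\<in>?Ms. (1 / 4) ^ ?h M)"
    using mult_left_mono[OF moment, of "T * 4 ^ T"] by (simp add: algebra_simps)
  also have "\<dots> = (\<Sum>M\<in>?Ms. real T * (1 - 4 ^ T * (1 / 4) ^ ?h M))"
    by (simp add: sum_subtractf sum_distrib_left algebra_simps)
  also have "\<dots> \<le> (\<Sum>M\<in>?Ms. real (?h M))"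
    by (intro sum_mono of_nat_ge_quarter_power_bound)
  finally show ?thesis .
qed

lemma card_bool_lists_length_le: "card {xs :: bool list. length xs \<le> L} < 2 ^ (L + 1)"
proof -
  have "card {xs :: bool list. length xs \<le> L} = (\<Sum>i<L + 1. 2 ^ i)"
    using card_lists_length_le[of "UNIV :: bool set" L] by (simp add: lessThan_Suc_atMost)
  also have "\<dots> = 2 ^ (L + 1) - 1" using sum_power2[of "L + 1"] by (simp add: atLeast0LessThan)
  finally show ?thesis by simp
qed

lemma tail_coefficient_le:
  assumes "12 + 6 * T + 3 * L \<le> 2 * (N :: nat)"
  shows "4 ^ T * 2 ^ (L + 1) * (5 / 8) ^ N \<le> (1 / 8 :: real)"
proof -
  define A where "A = (4 :: real) ^ T * 2 ^ (L + 1) * 8"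
  have "((5 / 8 :: real) ^ N) ^ 3 = ((5 / 8) ^ 3) ^ N" by (simp only: power_mult[symmetric] mult.commute)
  also have "\<dots> \<le> (1 / 4) ^ N" by (rule power_mono) (simp_all add: eval_nat_numeral)
  finally have five: "((5 / 8 :: real) ^ N) ^ 3 \<le> (1 / 4) ^ N" .
  have "A = 2 ^ (2 * T + L + 4)" by (simp add: A_def power_add power_mult)
  then have "A ^ 3 = (2 :: real) ^ (3 * (2 * T + L + 4))"
    by (simp only: power_mult[symmetric] mult.commute)
  also have "\<dots> \<le> 2 ^ (2 * N)" by (rule power_increasing) (use assms in auto)
  also have "\<dots> = 4 ^ N" by (simp add: power_mult)
  finally have two: "A ^ 3 \<le> 4 ^ N" .
  have "(A * (5 / 8) ^ N) ^ 3 \<le> (4 :: real) ^ N * (1 / 4) ^ N"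
    unfolding power_mult_distrib by (rule mult_mono[OF two five]) auto
  also have "\<dots> = 1" by (simp add: power_one_over)
  finally have "A * (5 / 8) ^ N \<le> 1"
    using power_le_one_iff[of "A * (5 / 8) ^ N" 3] by (simp add: A_def)
  then show ?thesis by (simp add: A_def)
qed

definition sign_of :: "real \<Rightarrow> real" where
  "sign_of t = (if 0 \<le> t then 1 else -1)"

lemma mismatch_le_clip_sq:
  assumes "m \<in> {-1, 1}"
  shows "(if m \<noteq> sign_of v then 1 else 0) \<le> (clip (v - m))\<^sup>2"
  using assms by (auto simp: sign_of_def clip_def)

definition column_triangle :: "nat set \<Rightarrow> (nat \<times> nat) set" where
  "column_triangle J = Sigma J (\<lambda>j. {1..j})"

lemma column_triangle_subset: "J \<subseteq> {1..d} \<Longrightarrow> column_triangle J \<subseteq> lower_tri d"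
  by (auto simp: column_triangle_def lower_tri_def)

text \<open>Rounding each predicted column to signs, every wrong sign costs at least 1 in the clipped
  error; the entries above the diagonal are ignored, so that distinct columns are charged
  for disjoint sets of independent entries.\<close>
lemma mismatches_column_triangle_le_clipped_sq_err:
  assumes M: "M \<in> sym_sign_matrices d" and J: "J \<subseteq> {1..d}"
  shows "real (mismatches (column_triangle J) (\<lambda>p. sign_of (v (fst p) (snd p))) M)
         \<le> (\<Sum>j\<in>J. clipped_sq_err d (v j) M j)"
proof -
  let ?miss = "\<lambda>j i. if M j i \<noteq> sign_of (v j i) then 1 else (0::real)"
  have "finite J" using J finite_subset by blast
  moreover have "{p \<in> column_triangle J. M (fst p) (snd p) \<noteq> sign_of (v (fst p) (snd p))}
      = Sigma J (\<lambda>j. {i \<in> {1..j}. M j i \<noteq> sign_of (v j i)})"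
    by (auto simp: column_triangle_def)
  ultimately have "real (mismatches (column_triangle J) (\<lambda>p. sign_of (v (fst p) (snd p))) M)
        = (\<Sum>j\<in>J. real (card {i \<in> {1..j}. M j i \<noteq> sign_of (v j i)}))"
    by (simp add: mismatches_def card_SigmaI)
  also have "\<dots> = (\<Sum>j\<in>J. \<Sum>i\<in>{1..j}. ?miss j i)"
    by (intro sum.cong refl) (simp add: sum.inter_filter[symmetric])
  also have "\<dots> \<le> (\<Sum>j\<in>J. \<Sum>i\<in>{1..j}. (clip (v j i - M i j))\<^sup>2)"
  proof (intro sum_mono)
    fix j i assume "j \<in> J" "i \<in> {1..j}"
    then have "i \<in> {1..d}" "j \<in> {1..d}" using J by auto
    then have "M i j \<in> {-1, 1}" "M j i = M i j"
      using M unfolding sym_sign_matrices_def by auto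
    then show "?miss j i \<le> (clip (v j i - M i j))\<^sup>2" using mismatch_le_clip_sq by metis
  qed
  also have "\<dots> \<le> (\<Sum>j\<in>J. clipped_sq_err d (v j) M j)"
    unfolding clipped_sq_err_def by (intro sum_mono sum_mono2) (use J in auto)
  finally show ?thesis .
qed

lemma card_column_triangle: "finite J \<Longrightarrow> card (column_triangle J) = (\<Sum>j\<in>J. j)"
  by (simp add: column_triangle_def card_SigmaI)

lemma two_mult_sum_atLeastAtMost:
  fixes c d :: nat
  assumes "c \<le> Suc d"
  shows "2 * (\<Sum>j=c..d. j) = (c + d) * (Suc d - c)"
  using assms
proof (induction d)
  case 0
  then show ?case by (cases c) auto
next
  case (Suc d)
  show ?case
  proof (cases "c = Suc (Suc d)")
    case False
    then have c: "c \<le> Suc d" using Suc.prems by simp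
    then have "2 * (\<Sum>j=c..Suc d. j) = 2 * Suc d + (c + d) * (Suc d - c)"
      using Suc.IH by (simp add: atLeastAtMostSuc_conv)
    with c show ?thesis by (simp add: Suc_diff_le algebra_simps)
  qed simp
qed

lemma column_triangle_exponent_arith:
  fixes d c n T L :: nat
  assumes "12 \<le> d" and "c = (d + 1) div 2" and "n = d + 1 - c"
    and T: "7 * T \<le> n * d + 6" and L: "128 * L \<le> d * d"
  shows "12 + 6 * T + 3 * L \<le> (c + d) * n"
proof -
  consider k where "d = 2 * k" | k where "d = 2 * k + 1" by (metis oddE evenE)
  then show ?thesis
  proof cases
    case 1
    with assms have ck: "c = k" "n = k + 1" and "6 \<le> k" by auto
    then have "6 * k \<le> k * k" by simp
    moreover have "7 * T \<le> 2 * (k * k) + 2 * k + 6" "128 * L \<le> 4 * (k * k)"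
      using T L unfolding 1 ck by (simp_all add: algebra_simps)
    moreover have "(c + d) * n = 3 * (k * k) + 3 * k" unfolding 1 ck by (simp add: algebra_simps)
    ultimately show ?thesis using \<open>6 \<le> k\<close> by linarith
  next
    case 2
    with assms have ck: "c = k + 1" "n = k + 1" and "6 \<le> k" by auto
    then have "6 * k \<le> k * k" by simp
    moreover have "7 * T \<le> 2 * (k * k) + 3 * k + 7" "128 * L \<le> 4 * (k * k) + 4 * k + 1"
      using T L unfolding 2 ck by (simp_all add: algebra_simps)
    moreover have "(c + d) * n = 3 * (k * k) + 5 * k + 2" unfolding 2 ck by (simp add: algebra_simps)
    ultimately show ?thesis using \<open>6 \<le> k\<close> by linarith
  qed
qed

lemma two_mult_card_column_triangle_half:
  "c = (d + 1) div 2 \<Longrightarrow> 2 * card (column_triangle {c..d}) = (c + d) * (d + 1 - c)"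
  using two_mult_sum_atLeastAtMost[of c d] by (simp add: card_column_triangle)

lemma sum_mismatches_column_triangle_ge:
  assumes "1 \<le> d" and c: "c = (d + 1) div 2" and sign: "\<And>p. \<tau> p \<in> {-1, 1}"
  shows "real (card (sym_sign_matrices d)) * real ((d + 1 - c) * d) / 8
         \<le> (\<Sum>M\<in>sym_sign_matrices d. real (mismatches (column_triangle {c..d}) \<tau> M))"
proof -
  let ?Ms = "sym_sign_matrices d" and ?B = "column_triangle {c..d}" and ?n = "d + 1 - c"
  have B: "?B \<subseteq> lower_tri d" using c \<open>1 \<le> d\<close> by (intro column_triangle_subset) auto
  have "?n * d \<le> 4 * card ?B"
    using two_mult_card_column_triangle_half[OF c] mult_le_mono1[of d "c + d" ?n] mult.commute[of ?n d]
    by linarith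
  then have "real (card ?Ms) * real (?n * d) \<le> real (card ?Ms) * real (4 * card ?B)"
    by (intro mult_left_mono of_nat_mono) simp_all
  then have "real (card ?Ms) * real (?n * d) / 8 \<le> real (card ?Ms) * real (card ?B) / 2"
    by (simp add: algebra_simps)
  also have "\<dots> = (\<Sum>M\<in>?Ms. real (mismatches ?B \<tau> M))"
    using sum_mismatches[OF B sign] by simp
  finally show ?thesis .
qed

lemma sum_mismatches_column_triangle_encoded_ge:
  fixes f :: "(nat \<Rightarrow> nat \<Rightarrow> real) \<Rightarrow> bool list" and \<tau> :: "bool list \<Rightarrow> nat \<times> nat \<Rightarrow> real"
  assumes "12 \<le> d" and c: "c = (d + 1) div 2" and sign: "\<And>s p. \<tau> s p \<in> {-1, 1}"
    and length_f: "\<And>M. length (f M) * 128 \<le> d * d"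
  shows "real (card (sym_sign_matrices d)) * real ((d + 1 - c) * d) / 8
         \<le> (\<Sum>M\<in>sym_sign_matrices d. real (mismatches (column_triangle {c..d}) (\<tau> (f M)) M))"
proof -
  let ?Ms = "sym_sign_matrices d" and ?B = "column_triangle {c..d}" and ?n = "d + 1 - c"
  define T where "T = (?n * d + 6) div 7"
  define L where "L = d * d div 128"
  let ?S = "{xs :: bool list. length xs \<le> L}"
  have B: "?B \<subseteq> lower_tri d" using c \<open>12 \<le> d\<close> by (intro column_triangle_subset) auto
  have S: "finite ?S" "f ` ?Ms \<subseteq> ?S"
    using finite_lists_length_le[of "UNIV :: bool set" L] length_f
    by (auto simp: L_def less_eq_div_iff_mult_less_eq)
  have "12 + 6 * T + 3 * L \<le> 2 * card ?B"
    unfolding two_mult_card_column_triangle_half[OF c] T_def L_def using assms(1) c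
    by (intro column_triangle_exponent_arith) auto
  then have "4 ^ T * 2 ^ (L + 1) * (5 / 8) ^ card ?B \<le> (1 / 8 :: real)"
    by (rule tail_coefficient_le)
  moreover have "real (card ?S) \<le> 2 ^ (L + 1)"
  proof -
    have "card ?S \<le> 2 ^ (L + 1)" using card_bool_lists_length_le[of L] by linarith
    then have "real (card ?S) \<le> real (2 ^ (L + 1))" by (rule of_nat_mono)
    then show ?thesis by (simp only: of_nat_power of_nat_numeral)
  qed
  then have "4 ^ T * real (card ?S) * (5 / 8) ^ card ?B \<le> 4 ^ T * 2 ^ (L + 1) * (5 / 8) ^ card ?B"
    by (intro mult_right_mono mult_left_mono) simp_all
  ultimately have "real T * (7 / 8) \<le> real T * (1 - 4 ^ T * real (card ?S) * (5 / 8) ^ card ?B)"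
    by (intro mult_left_mono) (linarith, simp)
  moreover have "real (?n * d) \<le> 7 * real T"
  proof -
    have "x \<le> 7 * ((x + 6) div 7)" for x :: nat by presburger
    then have "real (?n * d) \<le> real (7 * T)" unfolding T_def by (rule of_nat_mono)
    then show ?thesis by (simp only: of_nat_mult of_nat_numeral)
  qed
  ultimately have "real (card ?Ms) * (real (?n * d) / 8)
      \<le> real (card ?Ms) * (real T * (1 - 4 ^ T * real (card ?S) * (5 / 8) ^ card ?B))"
    by (intro mult_left_mono) (linarith, simp)
  also have "\<dots> \<le> (\<Sum>M\<in>?Ms. real (mismatches ?B (\<tau> (f M)) M))"
    using sum_mismatches_encoded_ge[OF B sign S] by (simp only: mult.assoc)
  finally show ?thesis by (simp only: times_divide_eq_right)
qed

text \<open>For \<open>d \<le> 11\<close> the budget admits only the empty message, so the guess is fixed and the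
  mean of the binomial suffices; otherwise the union bound over all short messages applies.\<close>
lemma sum_mismatches_short_message_ge:
  fixes f :: "(nat \<Rightarrow> nat \<Rightarrow> real) \<Rightarrow> bool list" and \<tau> :: "bool list \<Rightarrow> nat \<times> nat \<Rightarrow> real"
  assumes "1 \<le> d" and length_f: "\<And>M. real (length (f M)) \<le> real d ^ 2 / 128"
    and sign: "\<And>s p. \<tau> s p \<in> {-1, 1}" and c: "c = (d + 1) div 2"
  shows "real (card (sym_sign_matrices d)) * real ((d + 1 - c) * d) / 8
         \<le> (\<Sum>M\<in>sym_sign_matrices d. real (mismatches (column_triangle {c..d}) (\<tau> (f M)) M))"
proof -
  have length_f': "length (f M) * 128 \<le> d * d" for M
  proof -
    have "real (length (f M) * 128) \<le> real (d * d)" using length_f[of M] by (simp add: power2_eq_square)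
    then show ?thesis by (simp only: of_nat_le_iff)
  qed
  show ?thesis
  proof (cases "d \<le> 11")
    case True
    have "f M = []" for M
    proof -
      have "length (f M) * 128 \<le> 121" using length_f'[of M] mult_le_mono[OF True True] by linarith
      then have "length (f M) = 0" by linarith
      then show ?thesis by simp
    qed
    then show ?thesis using sum_mismatches_column_triangle_ge[OF \<open>1 \<le> d\<close> c sign] by simp
  next
    case False
    then show ?thesis by (intro sum_mismatches_column_triangle_encoded_ge c sign length_f') simp
  qed
qed

lemma nat_ceiling_half: "nat \<lceil>real d / 2\<rceil> = (d + 1) div 2"
proof (cases "even d")
  case True
  then obtain k where d: "d = 2 * k" by blast
  have "\<lceil>real d / 2\<rceil> = int k" by (rule ceiling_unique) (auto simp: d)
  then show ?thesis using d by simp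
next
  case False
  then obtain k where d: "d = 2 * k + 1" using oddE by blast
  have "\<lceil>real d / 2\<rceil> = int k + 1" by (rule ceiling_unique) (auto simp: d)
  then show ?thesis using d by (simp add: nat_add_distrib)
qed

theorem mainTheorem12:
  fixes d :: nat
    and f :: "(nat \<Rightarrow> nat \<Rightarrow> real) \<Rightarrow> bool list"
    and g :: "bool list \<Rightarrow> nat \<Rightarrow> (nat \<Rightarrow> real)"
  assumes "d \<ge> 1"
    and "\<And>M. real (length (f M)) \<le> real d ^ 2 / 128"
  shows "measure_pmf.expectation
           (pmf_of_set (sym_sign_matrices d \<times> {nat \<lceil>real d / 2\<rceil>..d}))
           (\<lambda>(M, j). clipped_sq_err d (g (f M) j) M j)
         \<ge> real d / 8"
proof -
  define c where "c = (d + 1) div 2"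
  let ?Ms = "sym_sign_matrices d" and ?J = "{c..d}"
  let ?err = "\<lambda>M. \<Sum>j\<in>?J. clipped_sq_err d (g (f M) j) M j"
  have J: "?J \<subseteq> {1..d}" "card ?J = d + 1 - c" using assms(1) by (auto simp: c_def)
  have Ms: "finite ?Ms" "?Ms \<noteq> {}"
    using finite_sym_sign_matrices card_sym_sign_matrices[of d] by auto
  have pos: "0 < real (card ?Ms) * real (card ?J)"
    using Ms assms(1) by (simp add: card_gt_0_iff c_def)
  have "real (card ?Ms) * real (card ?J * d) / 8
        \<le> (\<Sum>M\<in>?Ms. real (mismatches (column_triangle ?J) (\<lambda>p. sign_of (g (f M) (fst p) (snd p))) M))"
    using sum_mismatches_short_message_ge[OF assms, of "\<lambda>s p. sign_of (g s (fst p) (snd p))"] J(2)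
    by (simp add: sign_of_def c_def)
  also have "\<dots> \<le> (\<Sum>M\<in>?Ms. ?err M)"
    by (intro sum_mono mismatches_column_triangle_le_clipped_sq_err J(1))
  finally have "real d / 8 \<le> (\<Sum>M\<in>?Ms. ?err M) / (card ?Ms * card ?J)"
    by (simp add: pos_le_divide_eq[OF pos] algebra_simps del: card_atLeastAtMost)
  also have "\<dots> = (\<Sum>(M, j)\<in>?Ms \<times> ?J. clipped_sq_err d (g (f M) j) M j) / card (?Ms \<times> ?J)"
    by (simp add: sum.cartesian_product card_cartesian_product del: card_atLeastAtMost)
  also have "\<dots> = measure_pmf.expectation (pmf_of_set (?Ms \<times> ?J)) (\<lambda>(M, j). clipped_sq_err d (g (f M) j) M j)"
    using Ms pos by (intro integral_pmf_of_set[symmetric]) auto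
  finally show ?thesis by (simp add: nat_ceiling_half c_def)
qed

end
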